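(* Let $\beta\in(1/2,1)$, assume the coupling below with each $G_{n,i}$ having a continuous density on $(0,1)$ bounded by a constant $C<\infty$ independent of $n,i$. Fix $0<\eta<1/2$, let $\mathcal U_n=\{kn^{-3}:k=1,\dots,n^3-1\}$ and $\mathcal U_n^\eta=\mathcal U_n\cap(n^{-1+\eta},1/2)$. Then for every $c>0$ and $h\in\{0,1\}$, \[ \Pr\Big(\max_{u\in\mathcal U_n^\eta}\sqrt n\big(\tilde F^{(h)}(u)-\mathbb E\tilde F^{(h)}(u)\big)w(u)\ge c\Big)\to0\qquad(n\to\infty). \]
   Context: $\epsilon_n=n^{-\beta}$. Coupling: $I\subset\{1,\dots,n\}$ random with each $i$ included independently with probability $\epsilon_n$; $Q^{(0)}_1,\dots,Q^{(0)}_n$ i.i.d. $\mathrm{Unif}(0,1)$ independent of $I$; for $i\in I$, $Q^{(1)}_i\sim G_{n,i}$ independently of everything else; for $i\notin I$, $Q^{(1)}_i=Q^{(0)}_i$. For $h\in\{0,1\}$, $\tilde F^{(h)}(t)=\frac1n\sum_{i\in I}\mathbf 1(Q^{(h)}_i\le t)$; $\mathbb E$ is unconditional expectation; $w(t)=1/\sqrt{t(1-t)}$. *)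

theory Defs
  imports "HOL-Probability.Probability"
begin

text \<open>Index type for the independent primitive random variables of the coupling
  for a given n: the inclusion indicator of i, the uniform Q0_i, and the draw Y_i from G_(n,i).\<close>
datatype coord = CI nat | CQ0 nat | CY nat

definition eps_n :: "real \<Rightarrow> nat \<Rightarrow> real" where
  "eps_n \<beta> n = real n powr (- \<beta>)"

definition Q1 :: "('a \<Rightarrow> bool) \<Rightarrow> ('a \<Rightarrow> real) \<Rightarrow> ('a \<Rightarrow> real) \<Rightarrow> 'a \<Rightarrow> real" where
  "Q1 Ind Q0 Y \<omega> = (if Ind \<omega> then Y \<omega> else Q0 \<omega>)"

definition Ftilde ::
  "nat \<Rightarrow> (nat \<Rightarrow> 'a \<Rightarrow> bool) \<Rightarrow> (nat \<Rightarrow> 'a \<Rightarrow> real) \<Rightarrow> (nat \<Rightarrow> 'a \<Rightarrow> real)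
     \<Rightarrow> nat \<Rightarrow> real \<Rightarrow> 'a \<Rightarrow> real" where
  "Ftilde n Ind Q0 Y h t \<omega> =
     (1 / real n) * (\<Sum>i\<in>{i. i < n \<and> Ind i \<omega>}.
        (if (if h = 0 then Q0 i \<omega> else Q1 (Ind i) (Q0 i) (Y i) \<omega>) \<le> t then 1 else 0))"

definition wt :: "real \<Rightarrow> real" where
  "wt t = 1 / sqrt (t * (1 - t))"

definition Ugrid :: "real \<Rightarrow> nat \<Rightarrow> real set" where
  "Ugrid \<eta> n = {u. \<exists>k::nat. 1 \<le> k \<and> k \<le> n ^ 3 - 1 \<and> u = real k / real n ^ 3}
                 \<inter> {real n powr (-1 + \<eta>) <..< 1/2}"

end

theory Submission
  imports Defs
begin

text \<open>The expectation term is nonnegative, so the event forces the count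
  S(u) = n F(u) of included indices with Q_i \<le> u to exceed c \<surd>n \<surd>(u(1-u)) for some
  u \<in> (4^-(n+1), 1/2]. Independence of the inclusion indicator from Q_i and the bounded
  density give P(i \<in> I, Q_i \<le> t) \<le> \<epsilon>_n K t, hence E S(t) \<le> n \<epsilon>_n K t. On the block
  4^-(j+1) < u \<le> 4^-j one has \<surd>(u(1-u)) \<ge> 2^-j/3 and S(u) \<le> S(4^-j), so by Markov's
  inequality the block contributes at most 3 K \<epsilon>_n \<surd>n 2^-j / c. Summing over j gives
  6 K \<epsilon>_n \<surd>n / c = O(n^(1/2-\<beta>)).\<close>

lemma (in prob_space) prob_distributed_atMost_le:
  assumes Z: "distributed M lborel Z (\<lambda>x. ennreal (f x))"
    and f_nonneg: "\<And>x. 0 \<le> f x" and f_le: "\<And>x. f x \<le> K"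
    and f_nonpos: "\<And>x. x \<le> 0 \<Longrightarrow> f x = 0" and v: "0 \<le> v"
  shows "prob (Z -` {..v} \<inter> space M) \<le> K * v"
proof -
  have K: "0 \<le> K" using f_nonneg[of 0] f_le[of 0] by linarith
  have "emeasure M (Z -` {..v} \<inter> space M) = (\<integral>\<^sup>+x. ennreal (f x) * indicator {..v} x \<partial>lborel)"
    by (rule distributed_emeasure[OF Z]) auto
  also have "\<dots> \<le> (\<integral>\<^sup>+x. ennreal K * indicator {0..v} x \<partial>lborel)"
    using f_nonpos f_le by (intro nn_integral_mono) (auto simp: indicator_def intro: ennreal_leI)
  also have "\<dots> = ennreal (K * v)"
    using K v by (simp add: nn_integral_cmult_indicator ennreal_mult)
  finally show ?thesis
    using K v by (simp add: emeasure_eq_measure)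
qed

lemma (in prob_space) indep_varsD_pair:
  assumes X: "indep_vars M' X I" and ab: "a \<in> I" "b \<in> I" "a \<noteq> b"
    and A: "A \<in> sets (M' a)" and B: "B \<in> sets (M' b)"
  shows "prob (X a -` A \<inter> X b -` B \<inter> space M) = prob (X a -` A \<inter> space M) * prob (X b -` B \<inter> space M)"
proof -
  define AB where "AB i = (if i = a then A else B)" for i
  have "prob (\<Inter>i\<in>{a, b}. X i -` AB i \<inter> space M) = (\<Prod>i\<in>{a, b}. prob (X i -` AB i \<inter> space M))"
    using ab A B by (intro indep_varsD[OF X]) (auto simp: AB_def)
  moreover have "(\<Inter>i\<in>{a, b}. X i -` AB i \<inter> space M) = X a -` A \<inter> X b -` B \<inter> space M"
    using ab by (auto simp: AB_def)
  ultimately show ?thesis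
    using ab by (simp add: AB_def)
qed

lemma (in prob_space) prob_card_Collect_ge_le:
  assumes I: "finite I" and P: "\<And>i. i \<in> I \<Longrightarrow> {\<omega> \<in> space M. P i \<omega>} \<in> sets M" and a: "0 < a"
  shows "prob {\<omega> \<in> space M. a \<le> real (card {i \<in> I. P i \<omega>})}
    \<le> (\<Sum>i\<in>I. prob {\<omega> \<in> space M. P i \<omega>}) / a"
proof -
  define T where "T \<omega> = (\<Sum>i\<in>I. indicator {\<omega> \<in> space M. P i \<omega>} \<omega> :: real)" for \<omega>
  have card_eq: "real (card {i \<in> I. P i \<omega>}) = T \<omega>" if "\<omega> \<in> space M" for \<omega>
    using I that by (simp add: T_def indicator_def sum.If_cases Int_def)
  have P_int: "integrable M (indicator {\<omega> \<in> space M. P i \<omega>} :: 'a \<Rightarrow> real)" if "i \<in> I" for i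
    using P[OF that] by (simp add: emeasure_eq_measure)
  have T_int: "integrable M T"
    unfolding T_def using P_int by (rule Bochner_Integration.integrable_sum)
  have "prob {\<omega> \<in> space M. a \<le> real (card {i \<in> I. P i \<omega>})} = prob {\<omega> \<in> space M. a \<le> T \<omega>}"
    by (rule arg_cong[where f = prob]) (auto simp: card_eq)
  also have "\<dots> \<le> (\<integral>\<omega>. T \<omega> \<partial>M) / a"
    by (rule integral_Markov_inequality_measure[OF T_int _ _ a, where A = "space M"])
      (auto simp: T_def intro!: sum_nonneg)
  also have "(\<integral>\<omega>. T \<omega> \<partial>M) = (\<Sum>i\<in>I. prob {\<omega> \<in> space M. P i \<omega>})"
    unfolding T_def using P
    by (subst Bochner_Integration.integral_sum) (auto intro: P_int)
  finally show ?thesis .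
qed

lemma borel_measurable_card_Collect:
  assumes "finite I" and "\<And>i. i \<in> I \<Longrightarrow> {\<omega> \<in> space M. P i \<omega>} \<in> sets M"
  shows "(\<lambda>\<omega>. real (card {i \<in> I. P i \<omega>})) \<in> borel_measurable M"
proof -
  have "real (card {i \<in> I. P i \<omega>}) = (\<Sum>i\<in>I. if P i \<omega> then 1 else 0)" for \<omega>
    using assms(1) by (simp add: sum.If_cases Int_def)
  then show ?thesis
    using assms by (simp add: borel_measurable_sum measurable_If)
qed

lemma quarter_power_bracket:
  fixes u :: real
  assumes "(1/4) ^ (N + 1) < u" "u \<le> 1"
  shows "\<exists>j\<le>N. (1/4) ^ (j + 1) < u \<and> u \<le> (1/4) ^ j"
  using assms
proof (induction N)
  case 0
  then show ?case by auto
next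
  case (Suc N)
  show ?case
  proof (cases "(1/4 :: real) ^ (N + 1) < u")
    case True
    then show ?thesis
      using Suc.IH Suc.prems(2) le_SucI by blast
  next
    case False
    then show ?thesis
      using Suc.prems(1) by (intro exI[of _ "Suc N"]) auto
  qed
qed

lemma weighted_exceedance_dyadic:
  fixes S :: "real \<Rightarrow> real"
  assumes S: "mono S" and u: "(1/4) ^ (N + 1) < u" "u \<le> 1/2"
    and b: "0 \<le> b" and exc: "b * sqrt (u * (1 - u)) \<le> S u"
  shows "\<exists>j\<le>N. b * (1/2) ^ j / 3 \<le> S ((1/4) ^ j)"
proof -
  obtain j where j: "j \<le> N" "(1/4) ^ (j + 1) < u" "u \<le> (1/4) ^ j"
    using quarter_power_bracket[OF u(1)] u(2) by auto
  have u_pos: "0 < u"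
    using u(1) by (rule order.strict_trans[rotated]) simp
  have "((1/2) ^ j / 3)\<^sup>2 = (1/4 :: real) ^ j / 9"
    by (simp add: power_divide power2_eq_square flip: power_mult_distrib)
  also have "\<dots> \<le> u / 2"
    using j(2) zero_le_power[of "1/4 :: real" j] unfolding power_add power_one_right by linarith
  also have "\<dots> \<le> u * (1 - u)"
    using u(2) u_pos by (simp add: mult_left_mono[of "1/2" "1 - u" u])
  finally have "(1/2) ^ j / 3 \<le> sqrt (u * (1 - u))"
    by (rule real_le_rsqrt)
  then have "b * (1/2) ^ j / 3 \<le> S u"
    using b exc by (smt (verit) mult_left_mono times_divide_eq_right)
  also have "S u \<le> S ((1/4) ^ j)"
    using S j(3) by (rule monoD)
  finally show ?thesis
    using j(1) by blast
qed

lemma quarter_power_less_powr: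
  assumes n: "1 \<le> n" and eta: "0 \<le> \<eta>"
  shows "(1/4) ^ (n + 1) < real n powr (-1 + \<eta>)"
proof -
  have "real n < 2 ^ n"
    by (metis less_exp of_nat_less_iff of_nat_numeral of_nat_power)
  also have "(2 :: real) ^ n \<le> 4 ^ (n + 1)"
    by (rule order.trans[OF power_mono power_increasing]) auto
  finally have "(1/4) ^ (n + 1) < 1 / real n"
    using n by (simp add: power_one_over divide_strict_left_mono)
  also have "\<dots> = real n powr -1"
    using n by (simp add: powr_minus_divide)
  also have "\<dots> \<le> real n powr (-1 + \<eta>)"
    using n eta by (intro powr_mono) auto
  finally show ?thesis .
qed

text \<open>The exceedance set quantifies over uncountably many u and need not be measurable,
  hence the bound through a measurable superset.\<close>

lemma (in prob_space) weighted_exceedance_outer_bound: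
  fixes S :: "real \<Rightarrow> 'a \<Rightarrow> real" and N :: nat and L b :: real
  assumes S_meas: "\<And>t. S t \<in> borel_measurable M"
    and S_mono: "\<And>\<omega>. mono (\<lambda>t. S t \<omega>)"
    and tail: "\<And>t a. 0 \<le> t \<Longrightarrow> 0 < a \<Longrightarrow> prob {\<omega> \<in> space M. a \<le> S t \<omega>} \<le> L * t / a"
    and b: "0 < b"
  shows "\<exists>A\<in>sets M. {\<omega> \<in> space M. \<exists>u\<in>{(1/4) ^ (N + 1)<..1/2}. b * sqrt (u * (1 - u)) \<le> S u \<omega>} \<subseteq> A
    \<and> prob A \<le> 6 * L / b"
proof (intro bexI conjI)
  define A where "A j = {\<omega> \<in> space M. b * (1/2) ^ j / 3 \<le> S ((1/4) ^ j) \<omega>}" for j :: nat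
  have A_sets: "A j \<in> sets M" for j
    unfolding A_def using S_meas by (intro borel_measurable_le) simp_all
  then show "(\<Union>j\<le>N. A j) \<in> sets M"
    by auto
  show "{\<omega> \<in> space M. \<exists>u\<in>{(1/4) ^ (N + 1)<..1/2}. b * sqrt (u * (1 - u)) \<le> S u \<omega>} \<subseteq> (\<Union>j\<le>N. A j)"
  proof safe
    fix \<omega> u assume "\<omega> \<in> space M" "u \<in> {(1/4) ^ (N + 1)<..1/2}" "b * sqrt (u * (1 - u)) \<le> S u \<omega>"
    then obtain j where "j \<le> N" "b * (1/2) ^ j / 3 \<le> S ((1/4) ^ j) \<omega>"
      using weighted_exceedance_dyadic[OF S_mono, of N u b] b by auto
    then show "\<omega> \<in> (\<Union>j\<le>N. A j)"
      using \<open>\<omega> \<in> space M\<close> by (auto simp: A_def)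
  qed
  have L: "0 \<le> L"
    using tail[of 1 1] measure_nonneg[of M "{\<omega> \<in> space M. 1 \<le> S 1 \<omega>}"] by linarith
  have prob_A: "prob (A j) \<le> 3 * L / b * (1/2) ^ j" for j
  proof -
    have "prob (A j) \<le> L * (1/4) ^ j / (b * (1/2) ^ j / 3)"
      unfolding A_def using b by (intro tail) auto
    also have "\<dots> = 3 * L / b * (1/2) ^ j"
    proof -
      have "(2 :: real) ^ j * 2 ^ j = 4 ^ j"
        by (simp flip: power_mult_distrib)
      then show ?thesis
        using b by (simp add: field_simps)
    qed
    finally show ?thesis .
  qed
  have "prob (\<Union>j\<le>N. A j) \<le> (\<Sum>j\<le>N. 3 * L / b * (1/2) ^ j)"
    using A_sets by (intro order.trans[OF measure_UNION_le sum_mono] prob_A) auto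
  also have "\<dots> = 3 * L / b * (\<Sum>j\<le>N. (1/2) ^ j)"
    by (simp add: sum_distrib_left)
  also have "\<dots> \<le> 3 * L / b * 2"
  proof (intro mult_left_mono)
    have "(\<Sum>j\<le>N. (1/2 :: real) ^ j) = 2 - (1/2) ^ N"
      by (induction N) auto
    then show "(\<Sum>j\<le>N. (1/2 :: real) ^ j) \<le> 2"
      by simp
  qed (use L b in auto)
  finally show "prob (\<Union>j\<le>N. A j) \<le> 6 * L / b"
    by simp
qed

lemma weighted_deviation_imp_exceedance:
  fixes n :: nat and s m c u :: real
  assumes dev: "c \<le> sqrt (real n) * (s / real n - m) * wt u"
    and m: "0 \<le> m" and u: "0 < u" "u < 1" and n: "0 < n"
  shows "c * sqrt (real n) * sqrt (u * (1 - u)) \<le> s"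
proof -
  define r where "r = sqrt (u * (1 - u))"
  have r: "0 < r"
    using u by (simp add: r_def)
  have "c \<le> sqrt (real n) * (s / real n - m) / r"
    using dev by (simp add: wt_def r_def)
  also have "\<dots> \<le> sqrt (real n) * (s / real n) / r"
    using m r by (intro divide_right_mono mult_left_mono) auto
  also have "\<dots> = s / (sqrt (real n) * r)"
  proof -
    have "x * (s / (x * x)) / r = s / (x * r)" if "0 < x" for x :: real
      using that r by (simp add: field_simps)
    then show ?thesis
      using n by (metis of_nat_0_less_iff real_sqrt_gt_zero real_sqrt_mult_self abs_of_nat)
  qed
  finally have "c \<le> s / (sqrt (real n) * r)" .
  then show ?thesis
    unfolding r_def[symmetric] using r n by (simp add: pos_le_divide_eq mult.assoc)
qed

lemma Ftilde_eq_card: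
  "Ftilde n Ind Q0 Y h t \<omega> =
    real (card {i \<in> {..<n}. Ind i \<omega> \<and> (if h = 0 then Q0 i \<omega> else Y i \<omega>) \<le> t}) / real n"
proof -
  have "{i \<in> {..<n}. Ind i \<omega> \<and> (if h = 0 then Q0 i \<omega> else Y i \<omega>) \<le> t}
      = {i. i < n \<and> Ind i \<omega>} \<inter> {i. (if h = 0 then Q0 i \<omega> else Q1 (Ind i) (Q0 i) (Y i) \<omega>) \<le> t}"
    by (auto simp: Q1_def)
  then show ?thesis
    by (simp add: Ftilde_def sum.If_cases)
qed

lemma Ugrid_deviation_imp_exceedance:
  assumes u: "u \<in> Ugrid \<eta> n" and eta: "0 \<le> \<eta>" and n: "1 \<le> n" and m: "0 \<le> m"
    and dev: "c \<le> sqrt (real n) * (Ftilde n Ind Q0 Y h u \<omega> - m) * wt u"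
  shows "u \<in> {(1/4) ^ (n + 1)<..1/2}"
    and "c * sqrt (real n) * sqrt (u * (1 - u))
      \<le> real (card {i \<in> {..<n}. Ind i \<omega> \<and> (if h = 0 then Q0 i \<omega> else Y i \<omega>) \<le> u})"
proof -
  have "(1/4) ^ (n + 1) < u"
    using u quarter_power_less_powr[OF n eta] by (auto simp: Ugrid_def)
  moreover have "u < 1/2"
    using u by (simp add: Ugrid_def)
  ultimately show "u \<in> {(1/4) ^ (n + 1)<..1/2}"
    by simp
  have "c \<le> sqrt (real n)
      * (real (card {i \<in> {..<n}. Ind i \<omega> \<and> (if h = 0 then Q0 i \<omega> else Y i \<omega>) \<le> u}) / real n - m) * wt u"
    using dev by (simp add: Ftilde_eq_card)
  then show "c * sqrt (real n) * sqrt (u * (1 - u))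
      \<le> real (card {i \<in> {..<n}. Ind i \<omega> \<and> (if h = 0 then Q0 i \<omega> else Y i \<omega>) \<le> u})"
  proof (rule weighted_deviation_imp_exceedance[OF _ m])
    show "0 < u"
      using \<open>(1/4) ^ (n + 1) < u\<close> by (rule order.strict_trans[rotated]) simp
  qed (use \<open>u < 1/2\<close> n in auto)
qed

abbreviation coupling_vars ::
  "(nat \<Rightarrow> 'a \<Rightarrow> bool) \<Rightarrow> (nat \<Rightarrow> 'a \<Rightarrow> real) \<Rightarrow> (nat \<Rightarrow> 'a \<Rightarrow> real) \<Rightarrow> coord \<Rightarrow> 'a \<Rightarrow> real" where
  "coupling_vars Ind Q0 Y \<equiv> \<lambda>j \<omega>. case j of
     CI i \<Rightarrow> (if Ind i \<omega> then 1 else 0) | CQ0 i \<Rightarrow> Q0 i \<omega> | CY i \<Rightarrow> Y i \<omega>"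

abbreviation coupling_coords :: "nat \<Rightarrow> coord set" where
  "coupling_coords n \<equiv> {CI i | i. i < n} \<union> {CQ0 i | i. i < n} \<union> {CY i | i. i < n}"

locale coupling = prob_space +
  fixes n :: nat and Ind :: "nat \<Rightarrow> 'a \<Rightarrow> bool" and Q0 Y :: "nat \<Rightarrow> 'a \<Rightarrow> real"
    and g :: "nat \<Rightarrow> real \<Rightarrow> real" and e C :: real
  assumes indep: "indep_vars (\<lambda>_. borel) (coupling_vars Ind Q0 Y) (coupling_coords n)"
    and incl: "\<And>i. i < n \<Longrightarrow> prob {\<omega> \<in> space M. Ind i \<omega>} = e"
    and unif: "\<And>i. i < n \<Longrightarrow> distributed M lborel (Q0 i) (\<lambda>x. ennreal (indicator {0<..<1} x))"
    and dens: "\<And>i. i < n \<Longrightarrow> distributed M lborel (Y i) (\<lambda>x. ennreal (g i x))"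
    and dens_supp: "\<And>i x. x \<notin> {0<..<1} \<Longrightarrow> g i x = 0"
    and dens_bnd: "\<And>i x. 0 \<le> g i x \<and> g i x \<le> C"
begin

lemma sets_included_and_below:
  assumes i: "i < n"
  shows "{\<omega> \<in> space M. Ind i \<omega> \<and> (if h = 0 then Q0 i \<omega> else Y i \<omega>) \<le> t} \<in> sets M"
proof -
  have "random_variable borel (coupling_vars Ind Q0 Y (CI i))"
    using indep i unfolding indep_vars_def2 by blast
  then have "coupling_vars Ind Q0 Y (CI i) -` {1} \<inter> space M \<in> sets M"
    by (rule measurable_sets) simp
  also have "coupling_vars Ind Q0 Y (CI i) -` {1} \<inter> space M = {\<omega> \<in> space M. Ind i \<omega>}"
    by (auto split: if_splits)
  finally have Ind_sets: "{\<omega> \<in> space M. Ind i \<omega>} \<in> sets M" .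
  have "(\<lambda>\<omega>. if h = 0 then Q0 i \<omega> else Y i \<omega>) \<in> borel_measurable M"
    using distributed_measurable[OF unif[OF i]] distributed_measurable[OF dens[OF i]]
    by (cases "h = 0") simp_all
  then have "{\<omega> \<in> space M. Ind i \<omega>} \<inter> {\<omega> \<in> space M. (if h = 0 then Q0 i \<omega> else Y i \<omega>) \<le> t} \<in> sets M"
    using Ind_sets by (intro sets.Int borel_measurable_le) simp_all
  then show ?thesis
    by (simp add: Collect_conj_eq Int_assoc Int_left_commute)
qed

lemma prob_included_and_below_le:
  assumes i: "i < n" and t: "0 \<le> t"
  shows "prob {\<omega> \<in> space M. Ind i \<omega> \<and> (if h = 0 then Q0 i \<omega> else Y i \<omega>) \<le> t} \<le> e * (max C 1 * t)"
proof -
  define f where "f x = (if h = 0 then indicator {0<..<1} x else g i x)" for x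
  define b where "b = (if h = 0 then CQ0 i else CY i)"
  have Z: "distributed M lborel (if h = 0 then Q0 i else Y i) (\<lambda>x. ennreal (f x))"
    using unif[OF i] dens[OF i] by (simp add: f_def)
  have "prob {\<omega> \<in> space M. Ind i \<omega> \<and> (if h = 0 then Q0 i \<omega> else Y i \<omega>) \<le> t}
      = prob (coupling_vars Ind Q0 Y (CI i) -` {1} \<inter> coupling_vars Ind Q0 Y b -` {..t} \<inter> space M)"
    by (rule arg_cong[where f = prob]) (auto simp: b_def split: if_splits)
  also have "\<dots> = prob (coupling_vars Ind Q0 Y (CI i) -` {1} \<inter> space M)
      * prob (coupling_vars Ind Q0 Y b -` {..t} \<inter> space M)"
    using i by (intro indep_varsD_pair[OF indep]) (auto simp: b_def)
  also have "coupling_vars Ind Q0 Y (CI i) -` {1} \<inter> space M = {\<omega> \<in> space M. Ind i \<omega>}"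
    by (auto split: if_splits)
  also have "coupling_vars Ind Q0 Y b -` {..t} \<inter> space M = (if h = 0 then Q0 i else Y i) -` {..t} \<inter> space M"
    by (auto simp: b_def)
  also have "prob {\<omega> \<in> space M. Ind i \<omega>} * prob ((if h = 0 then Q0 i else Y i) -` {..t} \<inter> space M)
      \<le> e * (max C 1 * t)"
    unfolding incl[OF i] using dens_bnd[of i] dens_supp[of _ i] incl[OF i]
    by (intro mult_left_mono prob_distributed_atMost_le[OF Z _ _ _ t])
      (auto simp: f_def indicator_def le_max_iff_disj)
  finally show ?thesis .
qed

lemma prob_count_below_ge_le:
  assumes t: "0 \<le> t" and a: "0 < a"
  shows "prob {\<omega> \<in> space M. a \<le> real (card {i \<in> {..<n}. Ind i \<omega> \<and> (if h = 0 then Q0 i \<omega> else Y i \<omega>) \<le> t})}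
    \<le> (real n * e * max C 1) * t / a"
proof -
  have "prob {\<omega> \<in> space M. a \<le> real (card {i \<in> {..<n}. Ind i \<omega> \<and> (if h = 0 then Q0 i \<omega> else Y i \<omega>) \<le> t})}
      \<le> (\<Sum>i<n. prob {\<omega> \<in> space M. Ind i \<omega> \<and> (if h = 0 then Q0 i \<omega> else Y i \<omega>) \<le> t}) / a"
    using a by (intro prob_card_Collect_ge_le sets_included_and_below) auto
  also have "\<dots> \<le> (\<Sum>i<n. e * (max C 1 * t)) / a"
    using a t by (intro divide_right_mono sum_mono prob_included_and_below_le) auto
  finally show ?thesis
    by simp
qed

lemma prob_weighted_Ftilde_deviation_le:
  assumes eta: "0 \<le> \<eta>" and c: "0 < c" and n: "1 \<le> n"
  shows "prob {\<omega> \<in> space M. \<exists>u\<in>Ugrid \<eta> n.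
      sqrt (real n) * (Ftilde n Ind Q0 Y h u \<omega> - expectation (Ftilde n Ind Q0 Y h u)) * wt u \<ge> c}
    \<le> 6 * max C 1 / c * sqrt (real n) * e"
proof -
  define S where "S t \<omega> = real (card {i \<in> {..<n}. Ind i \<omega> \<and> (if h = 0 then Q0 i \<omega> else Y i \<omega>) \<le> t})"
    for t \<omega>
  have S_meas: "S t \<in> borel_measurable M" for t
    unfolding S_def by (intro borel_measurable_card_Collect sets_included_and_below) auto
  have S_mono: "mono (\<lambda>t. S t \<omega>)" for \<omega>
    unfolding S_def by (intro monoI of_nat_mono card_mono) auto
  have tail: "prob {\<omega> \<in> space M. a \<le> S t \<omega>} \<le> (real n * e * max C 1) * t / a"
    if "0 \<le> t" "0 < a" for t a
    unfolding S_def using that by (rule prob_count_below_ge_le)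
  have b: "0 < c * sqrt (real n)"
    using c n by simp
  obtain A where A: "A \<in> sets M"
    and A_sup: "{\<omega> \<in> space M. \<exists>u\<in>{(1/4) ^ (n + 1)<..1/2}. c * sqrt (real n) * sqrt (u * (1 - u)) \<le> S u \<omega>} \<subseteq> A"
    and prob_A: "prob A \<le> 6 * (real n * e * max C 1) / (c * sqrt (real n))"
    using weighted_exceedance_outer_bound[OF S_meas S_mono tail b, of n] by blast
  have "{\<omega> \<in> space M. \<exists>u\<in>Ugrid \<eta> n.
      sqrt (real n) * (Ftilde n Ind Q0 Y h u \<omega> - expectation (Ftilde n Ind Q0 Y h u)) * wt u \<ge> c}
    \<subseteq> {\<omega> \<in> space M. \<exists>u\<in>{(1/4) ^ (n + 1)<..1/2}. c * sqrt (real n) * sqrt (u * (1 - u)) \<le> S u \<omega>}"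
  proof safe
    fix \<omega> u assume u: "u \<in> Ugrid \<eta> n"
      and dev: "c \<le> sqrt (real n) * (Ftilde n Ind Q0 Y h u \<omega> - expectation (Ftilde n Ind Q0 Y h u)) * wt u"
    have "0 \<le> expectation (Ftilde n Ind Q0 Y h u)"
      by (intro Bochner_Integration.integral_nonneg) (simp add: Ftilde_eq_card)
    note exceeds = Ugrid_deviation_imp_exceedance[OF u eta n this dev]
    show "\<exists>u\<in>{(1/4) ^ (n + 1)<..1/2}. c * sqrt (real n) * sqrt (u * (1 - u)) \<le> S u \<omega>"
      unfolding S_def using exceeds by (intro bexI[where x = u])
  qed
  with A A_sup have "prob {\<omega> \<in> space M. \<exists>u\<in>Ugrid \<eta> n.
      sqrt (real n) * (Ftilde n Ind Q0 Y h u \<omega> - expectation (Ftilde n Ind Q0 Y h u)) * wt u \<ge> c}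
    \<le> prob A"
    by (intro finite_measure_mono) auto
  also have "\<dots> \<le> 6 * (real n * e * max C 1) / (c * sqrt (real n))"
    by (rule prob_A)
  also have "\<dots> = 6 * max C 1 / c * (real n / sqrt (real n)) * e"
    using c n by (simp add: field_simps)
  also have "real n / sqrt (real n) = sqrt (real n)"
    by (rule real_div_sqrt) simp
  finally show ?thesis .
qed

end

theorem lemma14:
  fixes M :: "nat \<Rightarrow> 'a measure"
    and Ind :: "nat \<Rightarrow> nat \<Rightarrow> 'a \<Rightarrow> bool"
    and Q0 Y :: "nat \<Rightarrow> nat \<Rightarrow> 'a \<Rightarrow> real"
    and g :: "nat \<Rightarrow> nat \<Rightarrow> real \<Rightarrow> real"
    and \<beta> C \<eta> c :: real and h :: nat
  assumes beta: "1/2 < \<beta>" "\<beta> < 1"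
    and prob: "\<And>n. prob_space (M n)"
    and indep: "\<And>n. prob_space.indep_vars (M n) (\<lambda>_. borel)
        (\<lambda>j \<omega>. case j of CI i \<Rightarrow> (if Ind n i \<omega> then 1 else 0) | CQ0 i \<Rightarrow> Q0 n i \<omega> | CY i \<Rightarrow> Y n i \<omega>)
        ({CI i | i. i < n} \<union> {CQ0 i | i. i < n} \<union> {CY i | i. i < n})"
    and incl: "\<And>n i. i < n \<Longrightarrow>
        measure (M n) {\<omega> \<in> space (M n). Ind n i \<omega>} = eps_n \<beta> n"
    and unif: "\<And>n i. i < n \<Longrightarrow>
        distributed (M n) lborel (Q0 n i) (\<lambda>x. ennreal (indicator {0<..<1} x))"
    and dens: "\<And>n i. i < n \<Longrightarrow>
        distributed (M n) lborel (Y n i) (\<lambda>x. ennreal (g n i x))"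
    and dens_supp: "\<And>n i x. x \<notin> {0<..<1} \<Longrightarrow> g n i x = 0"
    and dens_cont: "\<And>n i. continuous_on {0<..<1} (g n i)"
    and dens_bnd: "\<And>n i x. 0 \<le> g n i x \<and> g n i x \<le> C"
    and eta: "0 < \<eta>" "\<eta> < 1/2"
    and c: "0 < c"
    and h: "h \<in> {0, 1}"
  shows "(\<lambda>n. measure (M n) {\<omega> \<in> space (M n).
            \<exists>u\<in>Ugrid \<eta> n.
              sqrt (real n) * (Ftilde n (Ind n) (Q0 n) (Y n) h u \<omega>
                 - prob_space.expectation (M n) (Ftilde n (Ind n) (Q0 n) (Y n) h u)) * wt u \<ge> c})
         \<longlonglongrightarrow> 0" (is "(\<lambda>n. ?p n) \<longlonglongrightarrow> 0")
proof (rule tendsto_sandwich[OF _ _ tendsto_const])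
  show "\<forall>\<^sub>F n in sequentially. 0 \<le> ?p n"
    by simp
  show "\<forall>\<^sub>F n in sequentially. ?p n \<le> 6 * max C 1 / c * real n powr (1/2 - \<beta>)"
  proof (rule eventually_sequentiallyI[of 1])
    fix n :: nat assume n: "1 \<le> n"
    interpret coupling "M n" n "Ind n" "Q0 n" "Y n" "g n" "eps_n \<beta> n" C
      using prob indep incl unif dens dens_supp dens_bnd by (intro coupling.intro coupling_axioms.intro) auto
    have "sqrt (real n) * eps_n \<beta> n = real n powr (1/2 - \<beta>)"
      using n by (simp add: eps_n_def powr_half_sqrt[symmetric] powr_add[symmetric])
    then show "?p n \<le> 6 * max C 1 / c * real n powr (1/2 - \<beta>)"
      using prob_weighted_Ftilde_deviation_le[OF less_imp_le[OF eta(1)] c n] by (simp add: mult.assoc)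
  qed
  show "(\<lambda>n. 6 * max C 1 / c * real n powr (1/2 - \<beta>)) \<longlonglongrightarrow> 0"
    using beta by (intro tendsto_mult_right_zero tendsto_neg_powr filterlim_real_sequentially) auto
qed

end
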